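(* Let $\mathcal H_A,\mathcal H_B$ be finite-dimensional Hilbert spaces and $U$ a unitary on $\mathcal H_A\otimes\mathcal H_B$. Then $U$ is a generalized thermal unitary if and only if there exist full-rank density operators $\alpha$ on $\mathcal H_A$ and $\beta$ on $\mathcal H_B$, not both maximally mixed, and density operators $\alpha'$ on $\mathcal H_A$, $\beta'$ on $\mathcal H_B$, such that $U(\alpha\otimes\beta)U^\dagger=\alpha'\otimes\beta'$.
   Context: A unitary $U$ on $\mathcal H_A\otimes\mathcal H_B$ is a generalized thermal unitary if there exist Hermitian operators $H_A,H_A'$ on $\mathcal H_A$ and $H_B,H_B'$ on $\mathcal H_B$, with at least one of $H_A,H_B$ not proportional to the identity, such that $U(H_A\otimes\mathbb 1+\mathbb 1\otimes H_B)U^\dagger=H_A'\otimes\mathbb 1+\mathbb 1\otimes H_B'$. *)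

theory Defs
  imports "HOL-Analysis.Analysis"
begin

text \<open>Finite-dimensional Hilbert spaces are modelled as C^'a with 'a a finite index type;
operators are complex matrices indexed by 'a. The bipartite space H_A (x) H_B is
C^('a \<times> 'b).\<close>

type_synonym 'a cmat = "complex^'a^'a"

definition dagger :: "('a::finite) cmat \<Rightarrow> 'a cmat" where
  "dagger A = (\<chi> i j. cnj (A $ j $ i))"

definition tensor :: "('a::finite) cmat \<Rightarrow> ('b::finite) cmat \<Rightarrow> ('a \<times> 'b) cmat" where
  "tensor A B = (\<chi> p q. A $ fst p $ fst q * B $ snd p $ snd q)"

definition unitary :: "('a::finite) cmat \<Rightarrow> bool" where
  "unitary U \<longleftrightarrow> U ** dagger U = mat 1 \<and> dagger U ** U = mat 1"

definition hermitian :: "('a::finite) cmat \<Rightarrow> bool" where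
  "hermitian H \<longleftrightarrow> dagger H = H"

definition positive_semidef :: "('a::finite) cmat \<Rightarrow> bool" where
  "positive_semidef A \<longleftrightarrow> hermitian A \<and>
     (\<forall>v :: complex^'a. 0 \<le> Re (\<Sum>i\<in>UNIV. cnj (v $ i) * (A *v v) $ i))"

definition density_op :: "('a::finite) cmat \<Rightarrow> bool" where
  "density_op \<rho> \<longleftrightarrow> positive_semidef \<rho> \<and> trace \<rho> = 1"

definition full_rank :: "('a::finite) cmat \<Rightarrow> bool" where
  "full_rank \<rho> \<longleftrightarrow> invertible \<rho>"

definition maximally_mixed :: "('a::finite) cmat \<Rightarrow> bool" where
  "maximally_mixed \<rho> \<longleftrightarrow> \<rho> = mat (1 / of_nat CARD('a))"

definition generalized_thermal_unitary :: "('a::finite \<times> 'b::finite) cmat \<Rightarrow> bool" where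
  "generalized_thermal_unitary U \<longleftrightarrow> unitary U \<and>
     (\<exists>(HA :: 'a cmat) HA' (HB :: 'b cmat) HB'.
        hermitian HA \<and> hermitian HA' \<and> hermitian HB \<and> hermitian HB' \<and>
        ((\<nexists>c. HA = mat c) \<or> (\<nexists>c. HB = mat c)) \<and>
        U ** (tensor HA (mat 1) + tensor (mat 1) HB) ** dagger U
          = tensor HA' (mat 1) + tensor (mat 1) HB')"

end

theory Submission
  imports Defs
begin

text \<open>Hermitian matrices are unitarily diagonalisable, which yields a functional calculus
\<open>H \<mapsto> f(H)\<close> that commutes with unitary conjugation. The exponential turns a local Hamiltonian
\<open>H\<^sub>A \<otimes> 1 + 1 \<otimes> H\<^sub>B\<close> into the product \<open>e\<^bsup>H\<^sub>A\<^esup> \<otimes> e\<^bsup>H\<^sub>B\<^esup>\<close>, and the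
partition function is multiplicative and unitarily invariant; so a unitary preserving local
Hamiltonians maps the product of the Gibbs states of \<open>H\<^sub>A, H\<^sub>B\<close> to that of \<open>H\<^sub>A', H\<^sub>B'\<close>.
Conversely the logarithm turns a product of full-rank states into a local Hamiltonian, and
\<open>\<alpha>' \<otimes> \<beta>'\<close> is full rank, being a unitary image of \<open>\<alpha> \<otimes> \<beta>\<close>. Non-triviality transfers
because a Gibbs state is maximally mixed only for a scalar Hamiltonian, and a state with
scalar logarithm is maximally mixed.\<close>

section \<open>Diagonal matrices, adjoints and unitary conjugation\<close>

definition diag :: "('n::finite \<Rightarrow> real) \<Rightarrow> 'n cmat" where
  "diag d = (\<chi> i j. if i = j then of_real (d i) else 0)"

lemma matrix_mult_diag_nth: "(A ** diag d) $ i $ j = A $ i $ j * of_real (d j)"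
  by (simp add: matrix_matrix_mult_def diag_def if_distrib cong: if_cong)

lemma diag_matrix_mult_nth: "(diag d ** A) $ i $ j = of_real (d i) * A $ i $ j"
  by (simp add: matrix_matrix_mult_def diag_def if_distrib if_distribR cong: if_cong)

lemma diag_mult_vec_nth: "(diag d *v x) $ k = of_real (d k) * x $ k"
  by (simp add: matrix_vector_mult_def diag_def if_distrib if_distribR cong: if_cong)

lemma diag_mult: "diag a ** diag b = diag (\<lambda>i. a i * b i)"
  by (simp add: vec_eq_iff matrix_mult_diag_nth) (simp add: diag_def)

lemma diag_add: "diag a + diag b = diag (\<lambda>i. a i + b i)"
  by (simp add: vec_eq_iff diag_def)

lemma mat_1_eq_diag: "mat 1 = diag (\<lambda>_. 1)"
  by (simp add: vec_eq_iff mat_def diag_def)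

lemma mat_mult_commute: "mat c ** A = A ** (mat c :: 'n::finite cmat)"
  by (simp add: vec_eq_iff matrix_matrix_mult_def mat_def if_distrib if_distribR mult.commute
      cong: if_cong)

lemma matrix_add_rdistrib: "(A + B) ** C = A ** C + B ** C"
  by (vector matrix_matrix_mult_def sum.distrib[symmetric] field_simps)

lemma dagger_dagger [simp]: "dagger (dagger A) = A"
  by (simp add: vec_eq_iff dagger_def)

lemma dagger_diag [simp]: "dagger (diag d) = diag d"
  by (simp add: vec_eq_iff dagger_def diag_def)

lemma dagger_mult: "dagger (A ** B) = dagger B ** dagger A"
  by (simp add: vec_eq_iff dagger_def matrix_matrix_mult_def cnj_sum mult.commute)

lemma dagger_add: "dagger (A + B) = dagger A + dagger B"
  by (simp add: vec_eq_iff dagger_def)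

lemma trace_diag: "trace (diag d) = of_real (\<Sum>i\<in>UNIV. d i)"
  by (simp add: trace_def diag_def)

lemma unitary_if_left_inverse: "dagger V ** V = mat 1 \<Longrightarrow> unitary V"
  unfolding unitary_def using matrix_left_right_inverse by blast

lemma unitary_dagger: "unitary U \<Longrightarrow> unitary (dagger U)"
  by (simp add: unitary_def)

lemma unitary_mult: "unitary U \<Longrightarrow> unitary V \<Longrightarrow> unitary (U ** V)"
  unfolding unitary_def dagger_mult by (metis matrix_mul_assoc matrix_mul_lid)

lemma invertible_unitary: "unitary U \<Longrightarrow> invertible U"
  unfolding unitary_def invertible_def by blast

lemma conj_conj: "U ** (V ** M ** dagger V) ** dagger U = (U ** V) ** M ** dagger (U ** V)"
  by (simp add: dagger_mult matrix_mul_assoc)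

lemma unitary_conj_eq_iff:
  assumes "unitary V"
  shows "V ** A ** dagger V = V ** B ** dagger V \<longleftrightarrow> A = B"
proof
  assume "V ** A ** dagger V = V ** B ** dagger V"
  then have "dagger V ** (V ** A ** dagger V) ** V = dagger V ** (V ** B ** dagger V) ** V"
    by simp
  then have "(dagger V ** V) ** A ** (dagger V ** V) = (dagger V ** V) ** B ** (dagger V ** V)"
    by (simp only: matrix_mul_assoc)
  with assms show "A = B" by (simp add: unitary_def)
qed simp

lemma trace_unitary_conj: "unitary V \<Longrightarrow> trace (V ** M ** dagger V) = trace M"
  unfolding unitary_def by (metis matrix_mul_assoc matrix_mul_lid trace_mul_sym)

lemma hermitian_conj_diag: "hermitian (V ** diag d ** dagger V)"
  by (simp add: hermitian_def dagger_mult matrix_mul_assoc)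

lemma conj_diag_eq_mat_iff:
  assumes "unitary V"
  shows "V ** diag d ** dagger V = mat c \<longleftrightarrow> (\<forall>i. of_real (d i) = c)"
proof -
  have "V ** mat c ** dagger V = mat c ** (V ** dagger V)"
    by (simp only: mat_mult_commute matrix_mul_assoc)
  then have "mat c = V ** mat c ** dagger V"
    using assms by (simp add: unitary_def)
  then have "V ** diag d ** dagger V = mat c \<longleftrightarrow> diag d = mat c"
    using unitary_conj_eq_iff[OF assms] by metis
  also have "\<dots> \<longleftrightarrow> (\<forall>i. of_real (d i) = c)"
    by (auto simp: vec_eq_iff diag_def mat_def)
  finally show ?thesis .
qed

lemma conj_diag_scalar_iff:
  assumes "unitary V"
  shows "(\<exists>c. V ** diag d ** dagger V = mat c) \<longleftrightarrow> (\<forall>i j. d i = d j)"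
proof
  assume "\<exists>c. V ** diag d ** dagger V = mat c"
  then obtain c :: complex where "\<forall>i. of_real (d i) = c"
    by (auto simp: conj_diag_eq_mat_iff[OF assms])
  then show "\<forall>i j. d i = d j" by (metis of_real_eq_iff)
next
  assume "\<forall>i j. d i = d j"
  then have "V ** diag d ** dagger V = mat (of_real (d i))" for i
    by (simp add: conj_diag_eq_mat_iff[OF assms])
  then show "\<exists>c. V ** diag d ** dagger V = mat c" by blast
qed

section \<open>The spectral theorem for Hermitian matrices\<close>

definition cinner :: "complex^'n::finite \<Rightarrow> complex^'n \<Rightarrow> complex" where
  "cinner x y = (\<Sum>i\<in>UNIV. cnj (x $ i) * y $ i)"

lemma Re_cinner: "Re (cinner x y) = x \<bullet> y"
  by (simp add: cinner_def inner_vec_def inner_complex_def Re_sum)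

lemma cinner_self: "cinner x x = of_real (x \<bullet> x)"
proof -
  have "Im (cinner x x) = 0" by (simp add: cinner_def Im_sum)
  then show ?thesis using Re_cinner[of x x] by (simp add: complex_eq_iff)
qed

lemma cinner_commute: "cinner x y = cnj (cinner y x)"
  by (simp add: cinner_def mult.commute)

lemma cinner_add_right: "cinner x (y + z) = cinner x y + cinner x z"
  by (simp add: cinner_def distrib_left sum.distrib)

lemma cinner_scaleR_right: "cinner x (c *\<^sub>R y) = of_real c * cinner x y"
  by (simp add: cinner_def sum_distrib_left scaleR_conv_of_real[where 'a=complex] mult_ac)

lemma cinner_smult_left: "cinner (c *s x) y = cnj c * cinner x y"
  by (simp add: cinner_def sum_distrib_left mult_ac)

lemma cinner_dagger: "cinner x (A *v y) = cinner (dagger A *v x) y"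
  by (simp add: cinner_def dagger_def matrix_vector_mult_def sum_distrib_left sum_distrib_right
      mult_ac cnj_sum) (rule sum.swap)

lemma cinner_hermitian: "hermitian H \<Longrightarrow> cinner x (H *v y) = cinner (H *v x) y"
  by (metis cinner_dagger hermitian_def)

lemma matrix_vector_mult_scaleR: "(A::complex^'n^'m) *v (c *\<^sub>R x) = c *\<^sub>R (A *v x)"
  by (simp add: vec_eq_iff matrix_vector_mult_def scaleR_conv_of_real[where 'a=complex]
      sum_distrib_left mult_ac)

lemma hermitian_inner_commute:
  assumes "hermitian H"
  shows "x \<bullet> (H *v y) = y \<bullet> (H *v x)"
proof -
  have "x \<bullet> (H *v y) = Re (cinner (H *v x) y)"
    by (simp add: Re_cinner flip: cinner_hermitian[OF assms])
  also have "\<dots> = y \<bullet> (H *v x)"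
    by (subst cinner_commute) (simp add: Re_cinner)
  finally show ?thesis .
qed

lemma linear_le_quadratic_imp_zero:
  fixes r C :: real
  assumes "\<And>e. 2 * e * r \<le> e\<^sup>2 * C"
  shows "r = 0"
proof -
  define D where "D = \<bar>C\<bar> + 1"
  have D: "D > 0" "C \<le> D - 1" unfolding D_def by auto
  have "2 * (r / D) * r \<le> (r / D)\<^sup>2 * C" by (rule assms)
  then have "(2 * (r / D) * r) * D\<^sup>2 \<le> ((r / D)\<^sup>2 * C) * D\<^sup>2" by (rule mult_right_mono) simp
  then have "2 * r\<^sup>2 * D \<le> r\<^sup>2 * C" using D by (simp add: power2_eq_square field_simps)
  also have "\<dots> \<le> r\<^sup>2 * (D - 1)" using D by (simp add: mult_left_mono)
  finally have "r\<^sup>2 * (D + 1) \<le> 0" by (simp add: algebra_simps)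
  then show ?thesis using D by (simp add: mult_le_0_iff)
qed

lemma exists_nonzero_orthogonal:
  fixes B :: "(complex^'n::finite) set"
  assumes "finite B" and "card B < CARD('n)"
  obtains a where "a \<noteq> 0" and "\<forall>b\<in>B. cinner b a = 0"
proof -
  \<comment> \<open>Real orthogonality to both \<open>b\<close> and \<open>\<i> b\<close> is complex orthogonality to \<open>b\<close>.\<close>
  define T where "T = B \<union> (\<lambda>b. \<i> *s b) ` B"
  have "card T \<le> card B + card B"
    unfolding T_def by (metis card_Un_le card_image_le assms(1) add_left_mono order_trans)
  also have "\<dots> < DIM(complex^'n)" using assms(2) by (simp add: DIM_cart DIM_complex)
  finally have "span T \<noteq> UNIV"
    using dim_le_card'[of T] dim_eq_full[of T] assms(1) by (auto simp: T_def)
  then obtain a where "a \<noteq> 0" and a: "\<forall>x\<in>span T. a \<bullet> x = 0"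
    using span_not_UNIV_orthogonal by blast
  have "cinner b a = 0" if "b \<in> B" for b
  proof -
    have "b \<in> T" "\<i> *s b \<in> T" using that by (auto simp: T_def)
    then have "a \<bullet> b = 0" "a \<bullet> (\<i> *s b) = 0" using a span_base by blast+
    then have "Re (cinner b a) = 0" "Re (cinner (\<i> *s b) a) = 0"
      by (simp_all add: Re_cinner inner_commute)
    then show ?thesis by (simp add: cinner_smult_left complex_eq_iff)
  qed
  with \<open>a \<noteq> 0\<close> show thesis using that by blast
qed

lemma quadratic_form_max_on_subspace:
  fixes A :: "complex^'n::finite^'n"
  assumes S: "subspace S" and "a \<in> S" and "a \<noteq> 0"
  obtains v where "v \<in> S" and "v \<bullet> v = 1"
    and "\<And>u. u \<in> S \<Longrightarrow> u \<bullet> (A *v u) \<le> (v \<bullet> (A *v v)) * (u \<bullet> u)"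
proof -
  define q where "q u = u \<bullet> (A *v u)" for u
  define K where "K = S \<inter> sphere 0 1"
  have "compact K"
    unfolding K_def by (rule closed_Int_compact[OF closed_subspace[OF S] compact_sphere])
  moreover have "inverse (norm a) *\<^sub>R a \<in> K"
    unfolding K_def using assms subspace_scale[OF S] by auto
  then have "K \<noteq> {}" by blast
  moreover have "continuous_on K q"
    unfolding q_def by (intro continuous_intros matrix_vector_mult_linear_continuous_on)
  ultimately obtain v where "v \<in> K" and max: "\<forall>y\<in>K. q y \<le> q v"
    using continuous_attains_sup by blast
  then have "v \<in> S" "v \<bullet> v = 1" by (auto simp: K_def dot_square_norm)
  moreover have "q u \<le> q v * (u \<bullet> u)" if "u \<in> S" for u
  proof (cases "u = 0")
    case False
    define c where "c = inverse (norm u)"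
    have "c *\<^sub>R u \<in> K" unfolding K_def c_def using that False subspace_scale[OF S] by auto
    then have "q (c *\<^sub>R u) \<le> q v" using max by blast
    then have "c\<^sup>2 * q u \<le> q v" by (simp add: q_def matrix_vector_mult_scaleR power2_eq_square)
    moreover have "c\<^sup>2 * (u \<bullet> u) = 1" "c\<^sup>2 > 0" unfolding c_def using False
      by (simp_all add: dot_square_norm field_simps)
    ultimately have "c\<^sup>2 * q u \<le> c\<^sup>2 * (q v * (u \<bullet> u))" by (simp add: algebra_simps)
    then show ?thesis using \<open>c\<^sup>2 > 0\<close> by simp
  qed (simp add: q_def)
  ultimately show thesis using that unfolding q_def by blast
qed

lemma quadratic_form_maximizer_eigenvector:
  fixes H :: "'n::finite cmat"
  assumes H: "hermitian H" and S: "subspace S" and HS: "\<And>x. x \<in> S \<Longrightarrow> H *v x \<in> S"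
    and v: "v \<in> S" "v \<bullet> v = 1"
    and max: "\<And>u. u \<in> S \<Longrightarrow> u \<bullet> (H *v u) \<le> l * (u \<bullet> u)"
    and l: "l = v \<bullet> (H *v v)"
  shows "H *v v = l *\<^sub>R v"
proof -
  define w where "w = H *v v - l *\<^sub>R v"
  have "w \<in> S" unfolding w_def using HS v S by (simp add: subspace_diff subspace_scale)
  have "w \<bullet> v = (H *v v) \<bullet> v - l * (v \<bullet> v)" by (simp add: w_def inner_diff_left)
  also have "\<dots> = 0" using v l by (simp add: inner_commute)
  finally have wv: "w \<bullet> v = 0" .
  have wHv: "w \<bullet> (H *v v) = w \<bullet> w"
    using wv by (simp add: w_def inner_diff_right)
  \<comment> \<open>Perturbing the maximizer \<open>v\<close> in the direction \<open>w\<close> gives a quadratic inequality in \<open>e\<close>.\<close>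
  have "2 * e * (w \<bullet> w) \<le> e\<^sup>2 * (l * (w \<bullet> w) - w \<bullet> (H *v w))" for e
  proof -
    define u where "u = v + e *\<^sub>R w"
    have "u \<in> S" unfolding u_def using v \<open>w \<in> S\<close> S by (simp add: subspace_add subspace_scale)
    have "u \<bullet> (H *v u) = l + 2 * e * (w \<bullet> w) + e\<^sup>2 * (w \<bullet> (H *v w))"
      using hermitian_inner_commute[OF H, of v w] wHv l
      by (simp add: u_def matrix_vector_right_distrib matrix_vector_mult_scaleR inner_add_left
          inner_add_right power2_eq_square algebra_simps)
    moreover have "u \<bullet> u = 1 + e\<^sup>2 * (w \<bullet> w)"
      using v wv by (simp add: u_def inner_add_left inner_add_right inner_commute power2_eq_square)
    ultimately show ?thesis using max[OF \<open>u \<in> S\<close>] by (simp add: algebra_simps)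
  qed
  then have "w \<bullet> w = 0" by (rule linear_le_quadratic_imp_zero)
  then show ?thesis by (simp add: w_def)
qed

definition orthonormal_eigenvectors :: "'n::finite cmat \<Rightarrow> (complex^'n) set \<Rightarrow> bool" where
  "orthonormal_eigenvectors H B \<longleftrightarrow> finite B \<and>
     (\<forall>v\<in>B. cinner v v = 1 \<and> (\<exists>l::real. H *v v = of_real l *s v)) \<and>
     (\<forall>u\<in>B. \<forall>v\<in>B. u \<noteq> v \<longrightarrow> cinner u v = 0)"

lemma orthonormal_eigenvectors_extend:
  fixes H :: "'n::finite cmat"
  assumes H: "hermitian H" and B: "orthonormal_eigenvectors H B" and "card B < CARD('n)"
  obtains v where "v \<notin> B" and "orthonormal_eigenvectors H (insert v B)"
proof -
  define S where "S = {w. \<forall>b\<in>B. cinner b w = 0}"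
  have S: "subspace S"
    unfolding subspace_def S_def by (simp add: cinner_add_right cinner_scaleR_right cinner_def[of _ 0])
  have HS: "H *v x \<in> S" if "x \<in> S" for x
  proof -
    have "cinner b (H *v x) = 0" if "b \<in> B" for b
    proof -
      obtain l :: real where "H *v b = of_real l *s b"
        using B \<open>b \<in> B\<close> unfolding orthonormal_eigenvectors_def by blast
      then show ?thesis
        using \<open>x \<in> S\<close> \<open>b \<in> B\<close> by (simp add: S_def cinner_hermitian[OF H] cinner_smult_left)
    qed
    then show ?thesis by (simp add: S_def)
  qed
  have "finite B" using B by (simp add: orthonormal_eigenvectors_def)
  then obtain a where "a \<noteq> 0" and "\<forall>b\<in>B. cinner b a = 0"
    using assms(3) by (rule exists_nonzero_orthogonal)
  then have "a \<in> S" "a \<noteq> 0" by (simp_all add: S_def)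
  then obtain v where v: "v \<in> S" "v \<bullet> v = 1"
    and max: "\<And>u. u \<in> S \<Longrightarrow> u \<bullet> (H *v u) \<le> (v \<bullet> (H *v v)) * (u \<bullet> u)"
    by (rule quadratic_form_max_on_subspace[OF S, where A = H]) blast
  have "H *v v = (v \<bullet> (H *v v)) *\<^sub>R v"
    by (rule quadratic_form_maximizer_eigenvector[OF H S HS v max refl])
  then have eig: "H *v v = of_real (v \<bullet> (H *v v)) *s v"
    by (simp add: vec_eq_iff scaleR_conv_of_real[where 'a=complex])
  have vv: "cinner v v = 1" using v by (simp add: cinner_self)
  have "v \<notin> B" using v(1) vv by (auto simp: S_def)
  moreover have "cinner b v = 0" "cinner v b = 0" if "b \<in> B" for b
    using v(1) that cinner_commute[of v b] by (auto simp: S_def)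
  then have "orthonormal_eigenvectors H (insert v B)"
    using B eig vv unfolding orthonormal_eigenvectors_def by (simp add: ball_simps) blast
  ultimately show thesis using that by blast
qed

lemma orthonormal_eigenvectors_exist:
  fixes H :: "'n::finite cmat"
  assumes "hermitian H" and "k \<le> CARD('n)"
  shows "\<exists>B. orthonormal_eigenvectors H B \<and> card B = k"
  using assms(2)
proof (induction k)
  case 0
  have "orthonormal_eigenvectors H {}" by (simp add: orthonormal_eigenvectors_def)
  then show ?case by force
next
  case (Suc k)
  then obtain B where B: "orthonormal_eigenvectors H B" "card B = k" by auto
  then obtain v where "v \<notin> B" "orthonormal_eigenvectors H (insert v B)"
    using orthonormal_eigenvectors_extend[OF assms(1) B(1)] Suc.prems by auto
  moreover have "finite B" using B(1) by (simp add: orthonormal_eigenvectors_def)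
  ultimately show ?case using B(2) card_insert_disjoint by fastforce
qed

lemma hermitian_spectral_decomposition:
  fixes H :: "'n::finite cmat"
  assumes H: "hermitian H"
  obtains V d where "unitary V" and "H = V ** diag d ** dagger V"
proof -
  obtain B where B: "orthonormal_eigenvectors H B" "card B = CARD('n)"
    using orthonormal_eigenvectors_exist[OF H] by blast
  then have "finite B" by (simp add: orthonormal_eigenvectors_def)
  then obtain h where h: "bij_betw h (UNIV::'n set) B"
    using finite_same_card_bij[of "UNIV::'n set" B] B(2) by auto
  then have hB: "h j \<in> B" for j by (simp add: bij_betw_apply)
  have hinj: "h j = h k \<Longrightarrow> j = k" for j k using h by (auto simp: bij_betw_def inj_on_def)
  obtain lam where lam: "\<forall>v\<in>B. H *v v = of_real (lam v) *s v"
    using B(1) unfolding orthonormal_eigenvectors_def by metis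
  define V :: "'n cmat" where "V = (\<chi> i j. h j $ i)"
  define d where "d j = lam (h j)" for j
  have "cinner (h j) (h k) = mat 1 $ j $ k" for j k
    using B(1) hB[of j] hB[of k] hinj[of j k]
    unfolding orthonormal_eigenvectors_def mat_def by auto
  then have "(dagger V ** V) $ j $ k = mat 1 $ j $ k" for j k
    by (simp add: matrix_matrix_mult_def dagger_def V_def cinner_def)
  then have V: "unitary V" by (intro unitary_if_left_inverse) (simp add: vec_eq_iff)
  have "(H ** V) $ i $ j = (H *v h j) $ i" for i j
    by (simp add: matrix_matrix_mult_def matrix_vector_mult_def V_def)
  then have HV: "H ** V = V ** diag d"
    using lam hB by (simp add: vec_eq_iff matrix_mult_diag_nth V_def d_def)
  have "H = H ** (V ** dagger V)" using V by (simp add: unitary_def)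
  also have "\<dots> = V ** diag d ** dagger V" by (simp only: matrix_mul_assoc HV)
  finally have "H = V ** diag d ** dagger V" .
  with V show thesis using that by blast
qed

lemma diag_mult_axis: "diag d *v axis i 1 = d i *\<^sub>R axis i 1"
  by (auto simp: vec_eq_iff diag_mult_vec_nth axis_def scaleR_conv_of_real[where 'a=complex])

lemma conj_diag_mult_column:
  assumes "unitary V"
  shows "(V ** diag d ** dagger V) *v (V *v axis i 1) = d i *\<^sub>R (V *v axis i 1)"
proof -
  have "(V ** diag d ** dagger V) *v (V *v axis i 1) = V *v (diag d *v ((dagger V ** V) *v axis i 1))"
    by (simp only: matrix_vector_mul_assoc matrix_mul_assoc)
  also have "\<dots> = V *v (d i *\<^sub>R axis i 1)"
    using assms by (simp add: unitary_def diag_mult_axis)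
  finally show ?thesis by (simp only: matrix_vector_mult_scaleR)
qed

lemma cinner_unitary_column:
  assumes "unitary V"
  shows "cinner (V *v axis i 1) (V *v axis i 1) = 1"
proof -
  have "cinner (V *v axis i 1) (V *v axis i 1) = cinner ((dagger V ** V) *v axis i 1) (axis i 1)"
    by (simp only: cinner_dagger matrix_vector_mul_assoc)
  also have "\<dots> = 1"
    using assms by (simp add: unitary_def cinner_def axis_def if_distrib if_distribR cong: if_cong)
  finally show ?thesis .
qed

lemma invertible_conj_diag_iff:
  assumes V: "unitary V"
  shows "invertible (V ** diag d ** dagger V) \<longleftrightarrow> (\<forall>i. d i \<noteq> 0)"
proof
  assume inv: "invertible (V ** diag d ** dagger V)"
  show "\<forall>i. d i \<noteq> 0"
  proof (intro allI notI)
    fix i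
    assume "d i = 0"
    let ?v = "V *v axis i 1"
    obtain B where "B ** (V ** diag d ** dagger V) = mat 1"
      using inv by (auto simp: invertible_def)
    then have "?v = (B ** (V ** diag d ** dagger V)) *v ?v"
      by simp
    also have "\<dots> = B *v ((V ** diag d ** dagger V) *v ?v)"
      by (rule matrix_vector_mul_assoc[symmetric])
    also have "\<dots> = 0" using \<open>d i = 0\<close> by (simp add: conj_diag_mult_column[OF V])
    finally show False using cinner_unitary_column[OF V, of i] by (simp add: cinner_def)
  qed
next
  assume "\<forall>i. d i \<noteq> 0"
  then have "diag d ** diag (inverse \<circ> d) = mat 1"
    by (simp add: diag_mult mat_1_eq_diag)
  have "(V ** diag d ** dagger V) ** (V ** diag (inverse \<circ> d) ** dagger V) =
      V ** (diag d ** (dagger V ** V) ** diag (inverse \<circ> d)) ** dagger V"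
    by (simp only: matrix_mul_assoc)
  also have "\<dots> = mat 1"
    using V \<open>diag d ** diag (inverse \<circ> d) = mat 1\<close> by (simp add: unitary_def)
  finally show "invertible (V ** diag d ** dagger V)"
    using matrix_left_right_inverse invertible_def by blast
qed

lemma positive_semidef_conj_diag_iff:
  assumes V: "unitary V"
  shows "positive_semidef (V ** diag d ** dagger V) \<longleftrightarrow> (\<forall>i. 0 \<le> d i)"
proof
  assume psd: "positive_semidef (V ** diag d ** dagger V)"
  show "\<forall>i. 0 \<le> d i"
  proof
    fix i
    let ?v = "V *v axis i 1"
    have "0 \<le> Re (cinner ?v ((V ** diag d ** dagger V) *v ?v))"
      using psd by (simp add: positive_semidef_def cinner_def)
    also have "cinner ?v ((V ** diag d ** dagger V) *v ?v) = of_real (d i)"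
      by (simp add: conj_diag_mult_column[OF V] cinner_scaleR_right cinner_unitary_column[OF V])
    finally show "0 \<le> d i" by simp
  qed
next
  assume nonneg: "\<forall>i. 0 \<le> d i"
  have "0 \<le> Re (cinner v ((V ** diag d ** dagger V) *v v))" for v
  proof -
    define w where "w = dagger V *v v"
    have "(V ** diag d ** dagger V) *v v = V *v (diag d *v w)"
      by (simp only: w_def matrix_vector_mul_assoc matrix_mul_assoc)
    then have "cinner v ((V ** diag d ** dagger V) *v v) = cinner w (diag d *v w)"
      by (simp only: cinner_dagger[of v V] w_def)
    also have "\<dots> = (\<Sum>i\<in>UNIV. of_real (d i * (cmod (w $ i))\<^sup>2))"
    proof -
      have "cnj (w $ i) * (of_real (d i) * w $ i) = of_real (d i * (cmod (w $ i))\<^sup>2)" for i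
        using complex_norm_square[of "w $ i"] by (simp add: mult_ac)
      then show ?thesis by (simp only: cinner_def diag_mult_vec_nth)
    qed
    finally show ?thesis using nonneg by (simp add: sum_nonneg)
  qed
  then show "positive_semidef (V ** diag d ** dagger V)"
    by (simp add: positive_semidef_def hermitian_conj_diag cinner_def)
qed

lemma density_op_conj_diag_iff:
  assumes "unitary V"
  shows "density_op (V ** diag d ** dagger V) \<longleftrightarrow> (\<forall>i. 0 \<le> d i) \<and> (\<Sum>i\<in>UNIV. d i) = 1"
  using assms
  by (simp add: density_op_def positive_semidef_conj_diag_iff trace_unitary_conj trace_diag
      del: of_real_sum)

section \<open>Functional calculus\<close>

lemma conj_diag_comp_eq:
  fixes V W :: "'n::finite cmat"
  assumes V: "unitary V" and W: "unitary W"
    and eq: "V ** diag d ** dagger V = W ** diag e ** dagger W"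
  shows "V ** diag (f \<circ> d) ** dagger V = W ** diag (f \<circ> e) ** dagger W"
proof -
  define X where "X = dagger W ** V"
  have "X ** diag d = X ** diag d ** (dagger V ** V)"
    using V by (simp add: unitary_def)
  also have "\<dots> = dagger W ** (V ** diag d ** dagger V) ** V"
    by (simp only: X_def matrix_mul_assoc)
  also have "\<dots> = (dagger W ** W) ** diag e ** X"
    by (simp only: eq X_def matrix_mul_assoc)
  also have "\<dots> = diag e ** X"
    using W by (simp add: unitary_def)
  finally have "X $ i $ j * of_real (d j) = of_real (e i) * X $ i $ j" for i j
    by (simp add: vec_eq_iff matrix_mult_diag_nth diag_matrix_mult_nth)
  then have "X $ i $ j = 0 \<or> d j = e i" for i j
    by (auto simp: mult.commute)
  \<comment> \<open>\<open>X\<close> only links eigenvectors with equal eigenvalues, so it intertwines \<open>f\<close> of them as well.\<close>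
  then have "X $ i $ j * of_real (f (d j)) = of_real (f (e i)) * X $ i $ j" for i j
    by (metis mult.commute mult_eq_0_iff)
  then have XF: "X ** diag (f \<circ> d) = diag (f \<circ> e) ** X"
    by (simp add: vec_eq_iff matrix_mult_diag_nth diag_matrix_mult_nth)
  have "V ** diag (f \<circ> d) ** dagger V = (W ** dagger W) ** V ** diag (f \<circ> d) ** dagger V"
    using W by (simp add: unitary_def)
  also have "\<dots> = W ** (X ** diag (f \<circ> d)) ** dagger V"
    by (simp only: X_def matrix_mul_assoc)
  also have "\<dots> = W ** (diag (f \<circ> e) ** X) ** dagger V"
    by (simp only: XF)
  also have "\<dots> = W ** diag (f \<circ> e) ** dagger W ** (V ** dagger V)"
    by (simp only: X_def matrix_mul_assoc)
  also have "\<dots> = W ** diag (f \<circ> e) ** dagger W"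
    using V by (simp add: unitary_def)
  finally show ?thesis .
qed

text \<open>By \<open>conj_diag_comp_eq\<close> the choice of diagonalisation does not matter; on
non-Hermitian matrices \<open>mat_fun f\<close> is unspecified.\<close>

definition mat_fun :: "(real \<Rightarrow> real) \<Rightarrow> 'n::finite cmat \<Rightarrow> 'n cmat" where
  "mat_fun f H = (SOME M. \<exists>V d. unitary V \<and> H = V ** diag d ** dagger V \<and>
                                M = V ** diag (f \<circ> d) ** dagger V)"

lemma mat_fun_conj_diag:
  assumes V: "unitary V"
  shows "mat_fun f (V ** diag d ** dagger V) = V ** diag (f \<circ> d) ** dagger V"
proof -
  let ?P = "\<lambda>M. \<exists>W e. unitary W \<and> V ** diag d ** dagger V = W ** diag e ** dagger W \<and>
                       M = W ** diag (f \<circ> e) ** dagger W"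
  have "?P (V ** diag (f \<circ> d) ** dagger V)" using V by blast
  then have "?P (mat_fun f (V ** diag d ** dagger V))"
    unfolding mat_fun_def by (rule someI)
  then obtain W e where "unitary W" and "V ** diag d ** dagger V = W ** diag e ** dagger W"
    and "mat_fun f (V ** diag d ** dagger V) = W ** diag (f \<circ> e) ** dagger W"
    by blast
  with conj_diag_comp_eq[OF V] show ?thesis by metis
qed

lemma hermitian_mat_fun: "hermitian H \<Longrightarrow> hermitian (mat_fun f H)"
  by (metis hermitian_spectral_decomposition mat_fun_conj_diag hermitian_conj_diag)

lemma mat_fun_unitary_conj:
  assumes U: "unitary U" and H: "hermitian H"
  shows "mat_fun f (U ** H ** dagger U) = U ** mat_fun f H ** dagger U"
proof -
  obtain V d where V: "unitary V" and "H = V ** diag d ** dagger V"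
    using hermitian_spectral_decomposition[OF H] .
  then show ?thesis
    using unitary_mult[OF U V] by (simp add: mat_fun_conj_diag conj_conj)
qed

section \<open>Tensor products\<close>

lemma sum_UNIV_prod: "(\<Sum>p\<in>UNIV. g p) = (\<Sum>i\<in>UNIV. \<Sum>j\<in>UNIV. g (i, j))"
  by (simp add: sum.cartesian_product flip: UNIV_Times_UNIV)

lemma tensor_mult: "tensor A B ** tensor C D = tensor (A ** C) (B ** D)"
  by (simp add: vec_eq_iff matrix_matrix_mult_def tensor_def sum_UNIV_prod sum_product mult_ac)

lemma dagger_tensor: "dagger (tensor A B) = tensor (dagger A) (dagger B)"
  by (simp add: vec_eq_iff dagger_def tensor_def)

lemma tensor_diag: "tensor (diag a) (diag b) = diag (\<lambda>p. a (fst p) * b (snd p))"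
  by (auto simp: vec_eq_iff diag_def tensor_def prod_eq_iff)

lemma tensor_mat_1: "tensor (mat 1) (mat 1) = mat 1"
  by (simp add: mat_1_eq_diag tensor_diag)

lemma unitary_tensor: "unitary U \<Longrightarrow> unitary V \<Longrightarrow> unitary (tensor U V)"
  unfolding unitary_def by (simp add: dagger_tensor tensor_mult tensor_mat_1)

lemma invertible_tensor: "invertible A \<Longrightarrow> invertible B \<Longrightarrow> invertible (tensor A B)"
  unfolding invertible_def by (metis tensor_mult tensor_mat_1)

lemma hermitian_tensor: "hermitian A \<Longrightarrow> hermitian B \<Longrightarrow> hermitian (tensor A B)"
  by (simp add: hermitian_def dagger_tensor)

lemma hermitian_tensor_sum:
  "hermitian A \<Longrightarrow> hermitian B \<Longrightarrow> hermitian (tensor A (mat 1) + tensor (mat 1) B)"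
  by (simp add: hermitian_def dagger_add dagger_tensor mat_1_eq_diag)

lemma tensor_conj_diag:
  "tensor (V ** diag a ** dagger V) (W ** diag b ** dagger W) =
     tensor V W ** diag (\<lambda>p. a (fst p) * b (snd p)) ** dagger (tensor V W)"
  by (simp add: tensor_mult dagger_tensor flip: tensor_diag)

lemma tensor_sum_conj_diag:
  assumes "unitary V" and "unitary W"
  shows "tensor (V ** diag a ** dagger V) (mat 1) + tensor (mat 1) (W ** diag b ** dagger W) =
     tensor V W ** diag (\<lambda>p. a (fst p) + b (snd p)) ** dagger (tensor V W)"
proof -
  let ?T = "tensor V W"
  have V1: "mat 1 = V ** diag (\<lambda>_. 1) ** dagger V" and W1: "mat 1 = W ** diag (\<lambda>_. 1) ** dagger W"
    using assms by (simp_all add: unitary_def flip: mat_1_eq_diag)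
  have "tensor (V ** diag a ** dagger V) (mat 1) = ?T ** diag (\<lambda>p. a (fst p)) ** dagger ?T"
    by (subst W1) (simp add: tensor_conj_diag)
  moreover have "tensor (mat 1) (W ** diag b ** dagger W) = ?T ** diag (\<lambda>p. b (snd p)) ** dagger ?T"
    by (subst V1) (simp add: tensor_conj_diag)
  ultimately show ?thesis
    by (simp add: matrix_add_ldistrib matrix_add_rdistrib flip: diag_add)
qed

lemma invertible_tensorD:
  assumes A: "hermitian A" and B: "hermitian B" and AB: "invertible (tensor A B)"
  shows "invertible A" and "invertible B"
proof -
  obtain V a where V: "unitary V" and A_eq: "A = V ** diag a ** dagger V"
    using hermitian_spectral_decomposition[OF A] .
  obtain W b where W: "unitary W" and B_eq: "B = W ** diag b ** dagger W"
    using hermitian_spectral_decomposition[OF B] .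
  have "\<forall>p. a (fst p) * b (snd p) \<noteq> 0"
    using AB unitary_tensor[OF V W]
    by (simp add: A_eq B_eq tensor_conj_diag invertible_conj_diag_iff del: mult_eq_0_iff)
  then have "\<forall>i. a i \<noteq> 0" "\<forall>j. b j \<noteq> 0" by auto
  then show "invertible A" "invertible B"
    by (simp_all add: A_eq B_eq invertible_conj_diag_iff V W)
qed

lemma mat_fun_tensor_sum:
  assumes A: "hermitian A" and B: "hermitian B" and fgh: "\<And>x y. f (x + y) = g x * h y"
  shows "mat_fun f (tensor A (mat 1) + tensor (mat 1) B) = tensor (mat_fun g A) (mat_fun h B)"
proof -
  obtain V a where V: "unitary V" and A_eq: "A = V ** diag a ** dagger V"
    using hermitian_spectral_decomposition[OF A] .
  obtain W b where W: "unitary W" and B_eq: "B = W ** diag b ** dagger W"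
    using hermitian_spectral_decomposition[OF B] .
  have "f \<circ> (\<lambda>p. a (fst p) + b (snd p)) = (\<lambda>p. (g \<circ> a) (fst p) * (h \<circ> b) (snd p))"
    by (simp add: fgh fun_eq_iff)
  with V W show ?thesis
    by (simp add: A_eq B_eq tensor_sum_conj_diag mat_fun_conj_diag unitary_tensor tensor_conj_diag)
qed

lemma mat_fun_tensor:
  assumes A: "hermitian A" "invertible A" and B: "hermitian B" "invertible B"
    and fgh: "\<And>x y. x \<noteq> 0 \<Longrightarrow> y \<noteq> 0 \<Longrightarrow> f (x * y) = g x + h y"
  shows "mat_fun f (tensor A B) = tensor (mat_fun g A) (mat 1) + tensor (mat 1) (mat_fun h B)"
proof -
  obtain V a where V: "unitary V" and A_eq: "A = V ** diag a ** dagger V"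
    using hermitian_spectral_decomposition[OF A(1)] .
  obtain W b where W: "unitary W" and B_eq: "B = W ** diag b ** dagger W"
    using hermitian_spectral_decomposition[OF B(1)] .
  have "\<forall>i. a i \<noteq> 0" "\<forall>j. b j \<noteq> 0"
    using A(2) B(2) by (simp_all add: A_eq B_eq invertible_conj_diag_iff V W)
  then have "f \<circ> (\<lambda>p. a (fst p) * b (snd p)) = (\<lambda>p. (g \<circ> a) (fst p) + (h \<circ> b) (snd p))"
    by (simp add: fgh fun_eq_iff)
  with V W show ?thesis
    by (simp add: A_eq B_eq tensor_sum_conj_diag mat_fun_conj_diag unitary_tensor tensor_conj_diag)
qed

section \<open>Gibbs states and logarithms of states\<close>

definition partition_function :: "'n::finite cmat \<Rightarrow> real" where
  "partition_function H = Re (trace (mat_fun exp H))"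

definition gibbs_state :: "'n::finite cmat \<Rightarrow> 'n cmat" where
  "gibbs_state H = mat_fun (\<lambda>x. exp x / partition_function H) H"

lemma partition_function_conj_diag:
  "unitary V \<Longrightarrow> partition_function (V ** diag d ** dagger V) = (\<Sum>i\<in>UNIV. exp (d i))"
  by (simp add: partition_function_def mat_fun_conj_diag trace_unitary_conj trace_diag
      del: of_real_sum)

lemma partition_function_unitary_conj:
  "unitary U \<Longrightarrow> hermitian H \<Longrightarrow> partition_function (U ** H ** dagger U) = partition_function H"
  by (simp add: partition_function_def mat_fun_unitary_conj trace_unitary_conj)

lemma partition_function_tensor_sum:
  assumes A: "hermitian A" and B: "hermitian B"
  shows "partition_function (tensor A (mat 1) + tensor (mat 1) B) =
    partition_function A * partition_function B"
proof -
  obtain V a where V: "unitary V" and A_eq: "A = V ** diag a ** dagger V"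
    using hermitian_spectral_decomposition[OF A] .
  obtain W b where W: "unitary W" and B_eq: "B = W ** diag b ** dagger W"
    using hermitian_spectral_decomposition[OF B] .
  show ?thesis using V W
    by (simp add: A_eq B_eq tensor_sum_conj_diag partition_function_conj_diag unitary_tensor
        sum_UNIV_prod sum_product exp_add)
qed

lemma gibbs_state_conj_diag:
  "unitary V \<Longrightarrow> gibbs_state (V ** diag d ** dagger V) =
     V ** diag (\<lambda>i. exp (d i) / (\<Sum>j\<in>UNIV. exp (d j))) ** dagger V"
  by (simp add: gibbs_state_def partition_function_conj_diag mat_fun_conj_diag comp_def)

lemma gibbs_state_unitary_conj:
  "unitary U \<Longrightarrow> hermitian H \<Longrightarrow> gibbs_state (U ** H ** dagger U) = U ** gibbs_state H ** dagger U"
  by (simp add: gibbs_state_def partition_function_unitary_conj mat_fun_unitary_conj)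

lemma gibbs_state_tensor_sum:
  assumes "hermitian A" and "hermitian B"
  shows "gibbs_state (tensor A (mat 1) + tensor (mat 1) B) = tensor (gibbs_state A) (gibbs_state B)"
  unfolding gibbs_state_def partition_function_tensor_sum[OF assms]
  by (rule mat_fun_tensor_sum[OF assms]) (simp add: exp_add)

lemma density_op_gibbs_state:
  assumes "hermitian H"
  shows "density_op (gibbs_state H)" and "full_rank (gibbs_state H)"
proof -
  obtain V d where V: "unitary V" and H_eq: "H = V ** diag d ** dagger V"
    using hermitian_spectral_decomposition[OF assms] .
  have "0 < (\<Sum>j\<in>UNIV. exp (d j))" by (simp add: sum_pos)
  then show "density_op (gibbs_state H)" "full_rank (gibbs_state H)"
    using V by (simp_all add: H_eq gibbs_state_conj_diag density_op_conj_diag_iff full_rank_def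
        invertible_conj_diag_iff flip: sum_divide_distrib)
qed

lemma maximally_mixed_gibbs_stateD:
  assumes "hermitian H" and "maximally_mixed (gibbs_state H)"
  shows "\<exists>c. H = mat c"
proof -
  obtain V d where V: "unitary V" and H_eq: "H = V ** diag d ** dagger V"
    using hermitian_spectral_decomposition[OF assms(1)] .
  define Z where "Z = (\<Sum>j\<in>UNIV. exp (d j))"
  have "0 < Z" by (simp add: Z_def sum_pos)
  have "\<exists>c. V ** diag (\<lambda>i. exp (d i) / Z) ** dagger V = mat c"
    using assms(2) by (auto simp: maximally_mixed_def H_eq gibbs_state_conj_diag[OF V] Z_def)
  then have "\<forall>i j. exp (d i) / Z = exp (d j) / Z"
    by (rule conj_diag_scalar_iff[OF V, THEN iffD1])
  with \<open>0 < Z\<close> have "\<forall>i j. d i = d j" by simp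
  then show ?thesis unfolding H_eq by (rule conj_diag_scalar_iff[OF V, THEN iffD2])
qed

lemma density_op_hermitian: "density_op \<rho> \<Longrightarrow> hermitian \<rho>"
  by (simp add: density_op_def positive_semidef_def)

lemma maximally_mixed_if_ln_scalar:
  fixes \<rho> :: "'n::finite cmat"
  assumes "density_op \<rho>" and "full_rank \<rho>" and "mat_fun ln \<rho> = mat c"
  shows "maximally_mixed \<rho>"
proof -
  obtain V d where V: "unitary V" and \<rho>_eq: "\<rho> = V ** diag d ** dagger V"
    using hermitian_spectral_decomposition[OF density_op_hermitian[OF assms(1)]] .
  have "\<forall>i. 0 \<le> d i" and sum_d: "(\<Sum>i\<in>UNIV. d i) = 1" and "\<forall>i. d i \<noteq> 0"
    using assms(1,2) V
    by (simp_all add: \<rho>_eq density_op_conj_diag_iff full_rank_def invertible_conj_diag_iff)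
  then have pos: "0 < d i" for i by (simp add: order_less_le)
  have "V ** diag (ln \<circ> d) ** dagger V = mat c"
    using assms(3) by (simp add: \<rho>_eq mat_fun_conj_diag[OF V])
  then have "\<forall>i j. (ln \<circ> d) i = (ln \<circ> d) j"
    by (intro conj_diag_scalar_iff[OF V, THEN iffD1] exI)
  then have const: "d i = d k" for i k
    using pos[of i] pos[of k] by (metis comp_apply exp_ln)
  have "(\<Sum>i\<in>UNIV. d i) = (\<Sum>i\<in>(UNIV::'n set). d k)" for k
    by (rule sum.cong) (auto intro: const)
  then have "real CARD('n) * d k = 1" for k
    using sum_d by (simp only: sum_constant card_UNIV)
  then have "d k = 1 / real CARD('n)" for k
    by (simp add: eq_divide_eq mult.commute)
  then show ?thesis
    by (simp add: maximally_mixed_def \<rho>_eq conj_diag_eq_mat_iff[OF V])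
qed

lemma unitary_conj_tensor_gibbs_state:
  assumes U: "unitary U"
    and herm: "hermitian HA" "hermitian HB" "hermitian HA'" "hermitian HB'"
    and conj: "U ** (tensor HA (mat 1) + tensor (mat 1) HB) ** dagger U =
      tensor HA' (mat 1) + tensor (mat 1) HB'"
  shows "U ** tensor (gibbs_state HA) (gibbs_state HB) ** dagger U =
    tensor (gibbs_state HA') (gibbs_state HB')"
proof -
  have "U ** tensor (gibbs_state HA) (gibbs_state HB) ** dagger U =
      gibbs_state (U ** (tensor HA (mat 1) + tensor (mat 1) HB) ** dagger U)"
    using U herm by (simp add: gibbs_state_tensor_sum gibbs_state_unitary_conj hermitian_tensor_sum)
  also have "\<dots> = tensor (gibbs_state HA') (gibbs_state HB')"
    using herm by (simp add: conj gibbs_state_tensor_sum)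
  finally show ?thesis .
qed

lemma unitary_conj_tensor_mat_ln:
  assumes U: "unitary U"
    and herm: "hermitian \<alpha>" "hermitian \<beta>" "hermitian \<alpha>'" "hermitian \<beta>'"
    and inv: "invertible \<alpha>" "invertible \<beta>"
    and conj: "U ** tensor \<alpha> \<beta> ** dagger U = tensor \<alpha>' \<beta>'"
  shows "U ** (tensor (mat_fun ln \<alpha>) (mat 1) + tensor (mat 1) (mat_fun ln \<beta>)) ** dagger U =
    tensor (mat_fun ln \<alpha>') (mat 1) + tensor (mat 1) (mat_fun ln \<beta>')"
proof -
  have "invertible (tensor \<alpha>' \<beta>')"
    unfolding conj[symmetric] using U inv
    by (simp add: invertible_mult invertible_tensor invertible_unitary unitary_dagger)
  then have inv': "invertible \<alpha>'" "invertible \<beta>'"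
    using invertible_tensorD herm by blast+
  have "U ** (tensor (mat_fun ln \<alpha>) (mat 1) + tensor (mat 1) (mat_fun ln \<beta>)) ** dagger U =
      mat_fun ln (U ** tensor \<alpha> \<beta> ** dagger U)"
    using U herm inv by (simp add: mat_fun_unitary_conj hermitian_tensor mat_fun_tensor ln_mult)
  also have "\<dots> = tensor (mat_fun ln \<alpha>') (mat 1) + tensor (mat 1) (mat_fun ln \<beta>')"
    using herm inv' by (simp add: conj mat_fun_tensor ln_mult)
  finally show ?thesis .
qed

theorem theorem1:
  fixes U :: "('a::finite \<times> 'b::finite) cmat"
  assumes "unitary U"
  shows "generalized_thermal_unitary U \<longleftrightarrow>
    (\<exists>(\<alpha> :: 'a cmat) (\<beta> :: 'b cmat) \<alpha>' \<beta>'.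
       density_op \<alpha> \<and> density_op \<beta> \<and> full_rank \<alpha> \<and> full_rank \<beta> \<and>
       \<not> (maximally_mixed \<alpha> \<and> maximally_mixed \<beta>) \<and>
       density_op \<alpha>' \<and> density_op \<beta>' \<and>
       U ** tensor \<alpha> \<beta> ** dagger U = tensor \<alpha>' \<beta>')"
    (is "_ \<longleftrightarrow> ?product_preserved")
proof
  assume "generalized_thermal_unitary U"
  then obtain HA HA' :: "'a cmat" and HB HB' :: "'b cmat" where
    herm: "hermitian HA" "hermitian HB" "hermitian HA'" "hermitian HB'"
    and nonscalar: "(\<nexists>c. HA = mat c) \<or> (\<nexists>c. HB = mat c)"
    and conj: "U ** (tensor HA (mat 1) + tensor (mat 1) HB) ** dagger U =
      tensor HA' (mat 1) + tensor (mat 1) HB'"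
    unfolding generalized_thermal_unitary_def by blast
  show ?product_preserved
    using unitary_conj_tensor_gibbs_state[OF assms herm conj] herm nonscalar
      density_op_gibbs_state maximally_mixed_gibbs_stateD by meson
next
  assume ?product_preserved
  then obtain \<alpha> \<alpha>' :: "'a cmat" and \<beta> \<beta>' :: "'b cmat" where
    dens: "density_op \<alpha>" "density_op \<beta>" "density_op \<alpha>'" "density_op \<beta>'"
    and full: "full_rank \<alpha>" "full_rank \<beta>"
    and not_mm: "\<not> (maximally_mixed \<alpha> \<and> maximally_mixed \<beta>)"
    and conj: "U ** tensor \<alpha> \<beta> ** dagger U = tensor \<alpha>' \<beta>'"
    by blast
  note herm = dens[THEN density_op_hermitian]
  show "generalized_thermal_unitary U"
    unfolding generalized_thermal_unitary_def
    using unitary_conj_tensor_mat_ln[OF assms herm full[unfolded full_rank_def] conj]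
      assms herm not_mm dens full maximally_mixed_if_ln_scalar hermitian_mat_fun by meson
qed

end
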